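(* Let $\beta,\rho$ be simple closed curves in the plane that intersect in $\ell\ge 3$ points. Suppose that exactly one intersection point $z$ of $\beta$ and $\rho$ is tangential, and all other intersection points are crossings (transversal). Then there exists a digon $(\alpha,\gamma)$ of $(\beta,\rho)$ such that $\alpha\cup\gamma$ does not contain $z$.
   Context: A segment of a simple closed curve $\beta$ is a subset of $\beta$ homeomorphic to $[0,1]$. For non-disjoint simple closed curves $\beta,\rho$ in the plane, a digon of $(\beta,\rho)$ is a pair of segments $(\alpha,\gamma)$ with $\alpha\subseteq\beta$ and $\gamma\subseteq\rho$ such that (i) $\alpha$ and $\gamma$ have the same two endpoints $x,y$; (ii) the only points of $\beta$ in $\gamma$ are $x$ and $y$; (iii) the only points of $\rho$ in $\alpha$ are $x$ and $y$. An intersection point is a crossing if the curves meet transversally there, and tangential otherwise. *)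

theory Defs
  imports "HOL-Analysis.Analysis"
begin

definition simple_closed_curve :: "complex set \<Rightarrow> bool" where
  "simple_closed_curve S \<longleftrightarrow>
     (\<exists>g. simple_path g \<and> pathfinish g = pathstart g \<and> path_image g = S)"

definition segment_between :: "complex set \<Rightarrow> complex \<Rightarrow> complex \<Rightarrow> bool" where
  "segment_between A x y \<longleftrightarrow>
     (\<exists>h k. homeomorphism {0..1::real} A h k \<and> h 0 = x \<and> h 1 = y)"

definition digon :: "complex set \<Rightarrow> complex set \<Rightarrow> complex set \<Rightarrow> complex set \<Rightarrow> bool" where
  "digon \<beta> \<rho> \<alpha> \<gamma> \<longleftrightarrow>
     (\<exists>x y. \<alpha> \<subseteq> \<beta> \<and> \<gamma> \<subseteq> \<rho> \<and>
        segment_between \<alpha> x y \<and> segment_between \<gamma> x y \<and>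
        \<beta> \<inter> \<gamma> = {x, y} \<and> \<rho> \<inter> \<alpha> = {x, y})"

definition crossing_point :: "complex set \<Rightarrow> complex set \<Rightarrow> complex \<Rightarrow> bool" where
  "crossing_point \<beta> \<rho> z \<longleftrightarrow> z \<in> \<beta> \<inter> \<rho> \<and>
     (\<exists>g. arc g \<and> path_image g \<subseteq> \<rho> \<and> g (1/2) = z \<and> path_image g \<inter> \<beta> = {z} \<and>
          \<not> connected_component (- \<beta>) (g 0) (g 1))"

definition tangential_point :: "complex set \<Rightarrow> complex set \<Rightarrow> complex \<Rightarrow> bool" where
  "tangential_point \<beta> \<rho> z \<longleftrightarrow> z \<in> \<beta> \<inter> \<rho> \<and> \<not> crossing_point \<beta> \<rho> z"

end

theory Submission
  imports Defs
begin

text \<open>Parametrise both curves as loops based at z and list the intersection points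
  r(t 0) = z, r(t 1), ..., r(t (l - 1)) in the order in which \<rho> passes them. Each open piece of
  \<rho> between consecutive intersection points lies inside or outside \<beta>, and at a crossing the
  two adjacent pieces cannot both lie outside. A piece not ending at z, together with the arc of
  \<beta> between its endpoints that avoids z, is a digon as soon as \<rho> does not meet the interior of
  that arc. For l = 3 the only such piece works. Otherwise some such piece lies inside \<beta>; take one
  whose arc on \<beta> is shortest. If \<rho> met the interior of that arc, a piece inside \<beta> at the
  meeting point would, by the theta-curve theorem, have both ends on the arc, and its own arc
  would be shorter.\<close>

lemma simple_path_inj_interior:
  assumes "simple_path g" "x \<in> {0<..<1}" "y \<in> {0..1}" "g x = g y"
  shows "x = y"
  using assms unfolding simple_path_def loop_free_def by force

lemma simple_loop_bij_betw:
  assumes "simple_path g" "pathfinish g = pathstart g"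
  shows "bij_betw g {0..<1} (path_image g)"
proof (rule bij_betw_imageI)
  show "inj_on g {0..<1}"
    using assms(1) unfolding simple_path_def loop_free_def inj_on_def by force
  have "{0..1} = insert 1 {0..<1::real}" by auto
  moreover have "g 1 = g 0" using assms(2) by (simp add: pathstart_def pathfinish_def)
  ultimately show "g ` {0..<1} = path_image g" by (simp add: path_image_def)
qed

lemma simple_closed_curve_loop_at:
  assumes "simple_closed_curve S" "z \<in> S"
  obtains g where "simple_path g" "pathfinish g = pathstart g" "path_image g = S" "g 0 = z"
proof -
  obtain g where g: "simple_path g" "pathfinish g = pathstart g" "path_image g = S"
    using assms(1) unfolding simple_closed_curve_def by blast
  obtain u where u: "u \<in> {0..1}" "g u = z" using assms(2) g(3) unfolding path_image_def by auto
  show ?thesis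
  proof
    show "simple_path (shiftpath u g)" using simple_path_shiftpath[OF g(1,2)] u by auto
    show "pathfinish (shiftpath u g) = pathstart (shiftpath u g)" using closed_shiftpath[OF g(2) u(1)] .
    show "path_image (shiftpath u g) = S" using path_image_shiftpath[OF u(1) g(2)] g(3) by simp
    show "shiftpath u g 0 = z" using pathstart_shiftpath[of u g] u unfolding pathstart_def by auto
  qed
qed

lemma segment_between_iff_arc:
  "segment_between A x y \<longleftrightarrow>
     (\<exists>g. arc g \<and> path_image g = A \<and> pathstart g = x \<and> pathfinish g = y)" (is "_ \<longleftrightarrow> ?arc")
proof
  assume "segment_between A x y"
  then obtain h k where hom: "homeomorphism {0..1::real} A h k" and "h 0 = x" "h 1 = y"
    unfolding segment_between_def by blast
  have "continuous_on {0..1} h" "h ` {0..1} = A" "\<And>s. s \<in> {0..1} \<Longrightarrow> k (h s) = s"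
    using hom by (auto simp: homeomorphism_def)
  then have "arc h" "path_image h = A"
    unfolding arc_def path_def path_image_def by (metis inj_on_inverseI)+
  with \<open>h 0 = x\<close> \<open>h 1 = y\<close> show ?arc unfolding pathstart_def pathfinish_def by blast
next
  assume ?arc
  then obtain g where g: "arc g" "path_image g = A" "g 0 = x" "g 1 = y"
    unfolding pathstart_def pathfinish_def by blast
  then obtain k where "homeomorphism {0..1} A g k" using homeomorphism_arc by metis
  with g show "segment_between A x y" unfolding segment_between_def by blast
qed

text \<open>On the compact preimage of path_image g, which avoids the base point, r is a homeomorphism
  onto path_image g; its inverse lifts g.\<close>

lemma simple_loop_lift_path:
  fixes r :: "real \<Rightarrow> 'a::t2_space"
  assumes r: "simple_path r" "pathfinish r = pathstart r"
    and g: "path g" "path_image g \<subseteq> path_image r" "pathstart r \<notin> path_image g"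
  obtains \<psi> where "continuous_on {0..1} \<psi>" "\<psi> ` {0..1} \<subseteq> {0<..<1}"
    "\<forall>s \<in> {0..1}. r (\<psi> s) = g s"
proof -
  define K where "K = {0..1} \<inter> r -` path_image g"
  have contr: "continuous_on {0..1} r" using r(1) simple_path_imp_path path_def by blast
  have "closed K" unfolding K_def
    by (rule continuous_closed_preimage[OF contr]) (auto simp: closed_path_image g(1))
  then have "compact K" unfolding K_def by (simp add: compact_eq_bounded_closed bounded_Int)
  have K_interior: "K \<subseteq> {0<..<1}"
  proof
    fix s assume "s \<in> K"
    then have "s \<in> {0..1}" "r s \<in> path_image g" unfolding K_def by auto
    moreover have "r 1 = r 0" using r(2) by (simp add: pathstart_def pathfinish_def)
    moreover have "r 0 \<notin> path_image g" using g(3) by (simp add: pathstart_def)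
    ultimately show "s \<in> {0<..<1}"
      by (metis atLeastAtMost_iff greaterThanLessThan_iff less_eq_real_def)
  qed
  have "r ` K = path_image g"
  proof
    show "r ` K \<subseteq> path_image g" unfolding K_def by auto
    show "path_image g \<subseteq> r ` K"
    proof
      fix x assume "x \<in> path_image g"
      moreover then obtain s where "s \<in> {0..1}" "x = r s" using g(2) by (auto simp: path_image_def)
      ultimately show "x \<in> r ` K" unfolding K_def by blast
    qed
  qed
  moreover have "inj_on r K" using inj_on_subset[OF simple_path_inj_on[OF r(1)] K_interior] .
  moreover have "continuous_on K r" using contr K_def continuous_on_subset by blast
  ultimately obtain \<phi> where hom: "homeomorphism K (path_image g) r \<phi>"
    using homeomorphism_compact[OF \<open>compact K\<close>] by blast
  have contg: "continuous_on {0..1} g" using g(1) by (simp add: path_def)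
  have gK: "g ` {0..1} = path_image g" by (simp add: path_image_def)
  show thesis
  proof
    show "continuous_on {0..1} (\<phi> \<circ> g)"
      by (rule continuous_on_compose[OF contg]) (use hom gK in \<open>simp add: homeomorphism_def\<close>)
    show "(\<phi> \<circ> g) ` {0..1} \<subseteq> {0<..<1}"
      using hom K_interior gK unfolding homeomorphism_def by auto
    show "\<forall>s \<in> {0..1}. r ((\<phi> \<circ> g) s) = g s"
      using hom gK unfolding homeomorphism_def by auto
  qed
qed

lemma closed_segment_between_avoiding:
  fixes a t c u :: real
  assumes "a < t" "t < c" "u \<noteq> t" "a \<notin> closed_segment u t" "c \<notin> closed_segment u t"
  shows "u \<in> {a<..<t} \<union> {t<..<c}"
  using assms by (auto simp: closed_segment_eq_real_ivl split: if_splits)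

text \<open>Lift the arc of \<rho> witnessing the crossing to the parameter interval of r. It meets \<beta>
  only at its midpoint r t, so the lifted path runs from t to either end without passing a or c;
  hence both ends of the arc lie in X, contradicting that they are separated by \<beta>.\<close>

lemma crossing_point_not_one_sided:
  fixes r :: "real \<Rightarrow> complex"
  assumes r: "simple_path r" "pathfinish r = pathstart r" "path_image r = \<rho>"
      "pathstart r \<in> \<beta>"
    and ts: "0 \<le> a" "a < t" "t < c" "c \<le> 1" "r a \<in> \<beta>" "r c \<in> \<beta>"
    and cross: "crossing_point \<beta> \<rho> (r t)"
    and X: "connected X" "X \<subseteq> - \<beta>" "r ` ({a<..<t} \<union> {t<..<c}) \<subseteq> X"
  shows False
proof -
  obtain g where g: "arc g" "path_image g \<subseteq> \<rho>" "g (1/2) = r t" "path_image g \<inter> \<beta> = {r t}"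
    and sides: "\<not> connected_component (- \<beta>) (g 0) (g 1)"
    using cross unfolding crossing_point_def by blast
  have t: "t \<in> {0<..<1}" using ts by auto
  have g_inj: "u = v" if "u \<in> {0..1}" "v \<in> {0..1}" "g u = g v" for u v
    using g(1) that by (auto simp: arc_def inj_on_def)
  have "r t \<noteq> pathstart r"
    using simple_path_inj_interior[OF r(1) t, of 0] t by (auto simp: pathstart_def)
  then have start: "pathstart r \<notin> path_image g" using g(4) r(4) by (metis IntI singletonD)
  have sub: "path_image g \<subseteq> path_image r" using g(2) r(3) by simp
  obtain \<psi> where \<psi>: "continuous_on {0..1} \<psi>" "\<psi> ` {0..1} \<subseteq> {0<..<1}"
      "\<forall>s \<in> {0..1}. r (\<psi> s) = g s"
    by (rule simple_loop_lift_path[OF r(1,2) arc_imp_path[OF g(1)] sub start])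
  have \<psi>_in: "\<psi> s \<in> {0<..<1}" if "s \<in> {0..1}" for s using \<psi>(2) that by blast
  have "r t = r (\<psi> (1/2))" "\<psi> (1/2) \<in> {0..1}" using \<psi>(3) \<psi>_in[of "1/2"] g(3) by auto
  then have \<psi>_half: "\<psi> (1/2) = t" using simple_path_inj_interior[OF r(1) t] by metis
  have off_\<beta>: "r v \<notin> \<beta>" if v: "v \<in> \<psi> ` {0..1}" "v \<noteq> t" for v
  proof
    assume "r v \<in> \<beta>"
    obtain u where u: "u \<in> {0..1}" "v = \<psi> u" using v(1) by blast
    then have "g u \<in> path_image g \<inter> \<beta>"
      using \<psi>(3) \<open>r v \<in> \<beta>\<close> by (auto simp: path_image_def)
    then have "g u = g (1/2)" using g(3,4) by auto
    then have "u = 1/2" using g_inj[of u "1/2"] u(1) by simp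
    then show False using v(2) u(2) \<psi>_half by metis
  qed
  have end_in_X: "g s \<in> X" if s: "s \<in> {0,1}" for s
  proof -
    have seg: "closed_segment s (1/2) \<subseteq> {0..1}" using s by (auto simp: closed_segment_eq_real_ivl)
    have "closed_segment (\<psi> s) (\<psi> (1/2)) \<subseteq> \<psi> ` closed_segment s (1/2)"
      by (rule subset_continuous_image_segment_1[OF continuous_on_subset[OF \<psi>(1) seg]])
    then have seg_\<psi>: "closed_segment (\<psi> s) t \<subseteq> \<psi> ` {0..1}" using \<psi>_half seg by blast
    have a_notin: "a \<notin> closed_segment (\<psi> s) t" and c_notin: "c \<notin> closed_segment (\<psi> s) t"
      using off_\<beta>[of a] off_\<beta>[of c] seg_\<psi> ts by auto
    have "\<psi> s \<noteq> t"
    proof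
      assume "\<psi> s = t"
      then have "g s = g (1/2)" using \<psi>(3) g(3) s by auto
      then show False using g_inj[of s "1/2"] s by auto
    qed
    then have "\<psi> s \<in> {a<..<t} \<union> {t<..<c}"
      using closed_segment_between_avoiding[OF ts(2,3) _ a_notin c_notin] by blast
    then have "r (\<psi> s) \<in> X" using X(3) by blast
    moreover have "r (\<psi> s) = g s" using \<psi>(3) s by auto
    ultimately show "g s \<in> X" by simp
  qed
  have "connected_component (- \<beta>) (g 0) (g 1)"
    unfolding connected_component_def using end_in_X X(1,2) by blast
  with sides show False by blast
qed

text \<open>The chord c cuts the inside of the closed curve c1 \<union> c2 into the insides of c1 \<union> c and
  c2 \<union> c; a connected D avoiding c lies in one of them, whose closure meets c1 \<union> c2 only in c1
  or only in c2.\<close>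

lemma theta_curve_closure_side:
  fixes c1 c2 c :: "real \<Rightarrow> complex"
  assumes arcs: "arc c1" "arc c2" "arc c"
    and ends: "pathstart c1 = a" "pathfinish c1 = b" "pathstart c2 = a" "pathfinish c2 = b"
      "{pathstart c, pathfinish c} = {a, b}"
    and meet: "path_image c1 \<inter> path_image c2 = {a, b}"
      "path_image c \<inter> (path_image c1 \<union> path_image c2) = {a, b}"
    and chord: "path_image c \<inter> inside (path_image c1 \<union> path_image c2) \<noteq> {}"
    and D: "connected D" "D \<subseteq> inside (path_image c1 \<union> path_image c2)" "D \<inter> path_image c = {}"
  shows "closure D \<inter> (path_image c1 \<union> path_image c2) \<subseteq> path_image c1 \<or>
         closure D \<inter> (path_image c1 \<union> path_image c2) \<subseteq> path_image c2"
proof -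
  let ?T = "path_image c" let ?T1 = "path_image c1" let ?T2 = "path_image c2"
  have "a \<noteq> b" using arc_distinct_ends[OF arcs(1)] ends by simp
  obtain c' where c': "arc c'" "pathstart c' = a" "pathfinish c' = b" "path_image c' = ?T"
  proof (cases "pathstart c = a")
    case True
    then show thesis using that arcs(3) ends(5) \<open>a \<noteq> b\<close> by (metis doubleton_eq_iff)
  next
    case False
    then have "pathstart (reversepath c) = a" "pathfinish (reversepath c) = b"
      using ends(5) by (auto simp: doubleton_eq_iff)
    then show thesis using that arcs(3) by (metis arc_reversepath path_image_reversepath)
  qed
  obtain I: "inside(?T1 \<union> ?T) \<inter> inside(?T2 \<union> ?T) = {}"
          "inside(?T1 \<union> ?T) \<union> inside(?T2 \<union> ?T) \<union> (?T - {a,b}) = inside(?T1 \<union> ?T2)"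
    using split_inside_simple_closed_curve[of c1 a b c2 c'] arcs ends meet chord c' \<open>a \<noteq> b\<close>
    by (auto simp: arc_imp_simple_path)
  have closed_T: "closed (?T1 \<union> ?T)" "closed (?T2 \<union> ?T)"
    using arcs by (simp_all add: closed_Un closed_path_image arc_imp_path)
  have one_side: "closure D \<inter> (?T1 \<union> ?T2) \<subseteq> Ti"
    if "D \<subseteq> inside(Ti \<union> ?T)" "closed (Ti \<union> ?T)" "Ti \<subseteq> ?T1 \<union> ?T2" "{a, b} \<subseteq> Ti"
       "inside(Ti \<union> ?T) \<subseteq> inside(?T1 \<union> ?T2)" for Ti
  proof -
    have "closure D \<subseteq> closure (inside(Ti \<union> ?T))"
      using that closure_mono by blast
    also have "\<dots> \<subseteq> inside(Ti \<union> ?T) \<union> (Ti \<union> ?T)"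
      using frontier_inside_subset[OF that(2)] closure_Un_frontier by blast
    finally have "closure D \<subseteq> inside(Ti \<union> ?T) \<union> (Ti \<union> ?T)" .
    moreover have "inside(?T1 \<union> ?T2) \<inter> (?T1 \<union> ?T2) = {}" by simp
    moreover have "?T \<inter> (?T1 \<union> ?T2) \<subseteq> Ti" using meet(2) that(4) by simp
    ultimately show ?thesis using that by blast
  qed
  have ab: "{a, b} \<subseteq> ?T1" "{a, b} \<subseteq> ?T2" using meet(1) by auto
  have "D \<subseteq> inside(?T1 \<union> ?T) \<union> inside(?T2 \<union> ?T)" using D I by blast
  moreover have "open (inside(?T1 \<union> ?T))" "open (inside(?T2 \<union> ?T))"
    using closed_T open_inside by auto
  ultimately have "D \<subseteq> inside(?T1 \<union> ?T) \<or> D \<subseteq> inside(?T2 \<union> ?T)"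
    using connectedD[OF D(1)] I(1) by blast
  then show ?thesis
    using one_side[of ?T1] one_side[of ?T2] closed_T ab I(2) by blast
qed

lemma simple_loop_split_arcs:
  fixes g :: "real \<Rightarrow> 'a::real_normed_vector"
  assumes g: "simple_path g" "pathfinish g = pathstart g" and pq: "0 < p" "p < q" "q < 1"
  obtains c1 c2 where "arc c1" "arc c2" "pathstart c1 = g p" "pathfinish c1 = g q"
    "pathstart c2 = g p" "pathfinish c2 = g q" "path_image c1 = g ` {p..q}"
    "path_image c1 \<inter> path_image c2 = {g p, g q}" "path_image c1 \<union> path_image c2 = path_image g"
proof -
  define c1 where "c1 = subpath p q g"
  define c2 where "c2 = reversepath (subpath q 1 g +++ subpath 0 p g)"
  have g1: "g 1 = g 0" using g(2) by (simp add: pathfinish_def pathstart_def)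
  have inj: "s = s'" if "s \<in> {0<..<1}" "s' \<in> {0..1}" "g s = g s'" for s s'
    using simple_path_inj_interior[OF g(1)] that by blast
  have "arc c1" unfolding c1_def
    by (rule arc_simple_path_subpath[OF g(1)]) (use pq inj[of p q] in auto)
  have a1: "arc (subpath q 1 g)"
    by (rule arc_simple_path_subpath[OF g(1)]) (use pq inj[of q 0] g1 in auto)
  have a2: "arc (subpath 0 p g)"
    by (rule arc_simple_path_subpath[OF g(1)]) (use pq inj[of p 0] in auto)
  have im1: "path_image (subpath q 1 g) = g ` {q..1}" using pq by (simp add: path_image_subpath)
  have im2: "path_image (subpath 0 p g) = g ` {0..p}" using pq by (simp add: path_image_subpath)
  have "g ` {q..1} \<inter> g ` {0..p} \<subseteq> {g 0}"
  proof
    fix w assume "w \<in> g ` {q..1} \<inter> g ` {0..p}"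
    then obtain s s' where s: "s \<in> {q..1}" "s' \<in> {0..p}" "w = g s" "w = g s'" by auto
    show "w \<in> {g 0}"
    proof (cases "s = 1")
      case True then show ?thesis using s g1 by auto
    next
      case False
      then have "s = s'" using inj[of s s'] s pq by auto
      then show ?thesis using s pq by auto
    qed
  qed
  then have "arc (subpath q 1 g +++ subpath 0 p g)"
    by (intro arc_join[OF a1 a2]) (use g1 im1 im2 in auto)
  then have "arc c2" unfolding c2_def by (simp add: arc_reversepath)
  have im_c1: "path_image c1 = g ` {p..q}" unfolding c1_def using pq by (simp add: path_image_subpath)
  have im_c2: "path_image c2 = g ` ({q..1} \<union> {0..p})" unfolding c2_def
    using path_image_join[of "subpath q 1 g" "subpath 0 p g"] im1 im2 g1 by (auto simp: image_Un)
  have "path_image c1 \<inter> path_image c2 \<subseteq> {g p, g q}"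
  proof
    fix w assume w: "w \<in> path_image c1 \<inter> path_image c2"
    then obtain s s' where s: "s \<in> {p..q}" "s' \<in> {q..1} \<union> {0..p}" "w = g s" "w = g s'"
      using w im_c1 im_c2 by blast
    show "w \<in> {g p, g q}"
    proof (cases "s = p \<or> s = q")
      case True then show ?thesis using s by auto
    next
      case False
      then have "s = s'" using inj[of s s'] s pq by auto
      then show ?thesis using s False by auto
    qed
  qed
  moreover have "{g p, g q} \<subseteq> path_image c1 \<inter> path_image c2" using im_c1 im_c2 pq by auto
  ultimately have meet: "path_image c1 \<inter> path_image c2 = {g p, g q}" by blast
  have "{p..q} \<union> ({q..1} \<union> {0..p}) = {0..1::real}" using pq by auto
  then have union: "path_image c1 \<union> path_image c2 = path_image g"
    using im_c1 im_c2 unfolding path_image_def by (metis image_Un)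
  have "pathstart c1 = g p" "pathfinish c1 = g q" "pathstart c2 = g p" "pathfinish c2 = g q"
    unfolding c1_def c2_def using g1 by auto
  with that \<open>arc c1\<close> \<open>arc c2\<close> im_c1 meet union show thesis by blast
qed

lemma finite_set_increasing_enumeration:
  fixes T :: "real set"
  assumes T: "finite T" "T \<subseteq> {0..<1}" "0 \<in> T"
  obtains t where "strict_mono_on {..card T} t" "t 0 = 0" "t (card T) = 1" "t ` {..<card T} = T"
proof -
  define ts where "ts = sorted_list_of_set T"
  define t where "t i = (if i < card T then ts ! i else 1)" for i
  have ts: "length ts = card T" "set ts = T" "sorted_wrt (<) ts"
    using T(1) unfolding ts_def by auto
  have image: "t ` {..<card T} = T"
    using ts(1,2) unfolding t_def by (auto simp: set_conv_nth)
  have mono: "strict_mono_on {..card T} t"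
  proof (rule strict_mono_onI)
    fix i k assume "i \<in> {..card T}" "k \<in> {..card T}" "i < k"
    then have "i < card T" by auto
    show "t i < t k"
    proof (cases "k < card T")
      case True
      then show ?thesis using sorted_wrt_nth_less[OF ts(3) \<open>i < k\<close>] ts(1) \<open>i < card T\<close>
        unfolding t_def by auto
    next
      case False
      then have "t k = 1" unfolding t_def by simp
      moreover have "t i \<in> T" using image \<open>i < card T\<close> by blast
      ultimately show ?thesis using T(2) by auto
    qed
  qed
  obtain k where k: "k < card T" "t k = 0" using image T(3) by (metis imageE lessThan_iff)
  have "t 0 \<in> T" using image k(1) by force
  then have "0 \<le> t 0" using T(2) by auto
  moreover have "t 0 \<le> t k"
    using strict_mono_onD[OF mono, of 0 k] k(1) by (cases "k = 0") auto
  ultimately have "t 0 = 0" using k(2) by simp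
  moreover have "t (card T) = 1" unfolding t_def by simp
  ultimately show thesis using that mono image by blast
qed

lemma segment_between_commute: "segment_between A x y \<Longrightarrow> segment_between A y x"
  unfolding segment_between_iff_arc by (metis arc_reversepath path_image_reversepath
      pathstart_reversepath pathfinish_reversepath)

text \<open>The parameters t 0 < ... < t (l - 1) are those where r meets \<beta>; t l = 1 is a sentinel, so
  that piece j below is defined for every j < l.\<close>

locale crossing_loops =
  fixes \<beta> \<rho> :: "complex set" and z :: complex and b r :: "real \<Rightarrow> complex"
    and l :: nat and t :: "nat \<Rightarrow> real"
  assumes b: "simple_path b" "pathfinish b = pathstart b" "path_image b = \<beta>" "b 0 = z"
    and r: "simple_path r" "pathfinish r = pathstart r" "path_image r = \<rho>" "r 0 = z"
    and t_mono: "strict_mono_on {..l} t" and t_0: "t 0 = 0" and t_l: "t l = 1"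
    and t_image: "t ` {..<l} = {s \<in> {0..<1}. r s \<in> \<beta>}"
    and crossings: "\<forall>w \<in> \<beta> \<inter> \<rho> - {z}. crossing_point \<beta> \<rho> w"
    and three_le_l: "3 \<le> l"
begin

lemma t_less: "i < k \<Longrightarrow> k \<le> l \<Longrightarrow> t i < t k"
  using strict_mono_onD[OF t_mono] by auto

lemma t_less_iff: "i \<le> l \<Longrightarrow> k \<le> l \<Longrightarrow> t i < t k \<longleftrightarrow> i < k"
  using t_less by (metis linorder_neqE_nat order_less_asym order_less_irrefl)

lemma t_le: "i \<le> k \<Longrightarrow> k \<le> l \<Longrightarrow> t i \<le> t k"
  using t_less[of i k] by (cases "i = k") auto

lemma t_pos: "0 < k \<Longrightarrow> k \<le> l \<Longrightarrow> 0 < t k"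
  using t_less[of 0 k] t_0 by simp

lemma t_nonneg: "k \<le> l \<Longrightarrow> 0 \<le> t k"
  using t_pos[of k] t_0 by (cases "k = 0") auto

lemma t_less_1: "k < l \<Longrightarrow> t k < 1"
  using t_less[of k l] t_l by simp

lemma t_le_1: "k \<le> l \<Longrightarrow> t k \<le> 1"
  using t_less_1[of k] t_l by (cases "k = l") auto

lemma r_1: "r 1 = z"
  using r(2,4) by (simp add: pathstart_def pathfinish_def)

lemma z_in: "z \<in> \<beta> \<inter> \<rho>"
  using b(3,4) r(3,4) pathstart_in_path_image[of b] pathstart_in_path_image[of r]
  by (simp add: pathstart_def)

lemma r_inj: "s \<in> {0<..<1} \<Longrightarrow> s' \<in> {0..1} \<Longrightarrow> r s = r s' \<Longrightarrow> s = s'"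
  using simple_path_inj_interior[OF r(1)] by blast

lemma r_in_\<rho>: "s \<in> {0..1} \<Longrightarrow> r s \<in> \<rho>"
  using r(3) by (auto simp: path_image_def)

lemma r_t_in: "k \<le> l \<Longrightarrow> r (t k) \<in> \<beta> \<inter> \<rho>"
proof -
  assume "k \<le> l"
  then have "r (t k) \<in> \<rho>" using r_in_\<rho> t_nonneg t_le_1 by simp
  moreover have "r (t k) \<in> \<beta>"
  proof (cases "k = l")
    case True then show ?thesis using t_l r_1 z_in by simp
  next
    case False then show ?thesis using t_image \<open>k \<le> l\<close> by auto
  qed
  ultimately show ?thesis by blast
qed

lemma r_t_neq_z: "0 < k \<Longrightarrow> k < l \<Longrightarrow> r (t k) \<noteq> z"
  using r_inj[of "t k" 0] r(4) t_pos[of k] t_less_1[of k] by auto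

lemma intersection_param: "w \<in> \<beta> \<inter> \<rho> \<Longrightarrow> \<exists>k<l. w = r (t k)"
proof -
  assume w: "w \<in> \<beta> \<inter> \<rho>"
  then obtain s where "s \<in> {0..<1}" "w = r s"
    using bij_betw_imp_surj_on[OF simple_loop_bij_betw[OF r(1,2)]] r(3) by blast
  then have "s \<in> t ` {..<l}" using t_image w by auto
  then show ?thesis using \<open>w = r s\<close> by auto
qed

lemma r_notin_\<beta>_between: "j < l \<Longrightarrow> s \<in> {t j<..<t (Suc j)} \<Longrightarrow> r s \<notin> \<beta>"
proof
  assume j: "j < l" and s: "s \<in> {t j<..<t (Suc j)}" and "r s \<in> \<beta>"
  moreover have "s \<in> {0..<1}" using s t_nonneg[of j] t_le_1[of "Suc j"] j by auto
  ultimately have "s \<in> t ` {..<l}" using t_image by auto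
  then obtain i where "i < l" "s = t i" by auto
  then have "j < i" "i < Suc j" using s t_less_iff[of j i] t_less_iff[of i "Suc j"] j by auto
  then show False by simp
qed

definition piece :: "nat \<Rightarrow> complex set" where
  "piece j = r ` {t j<..<t (Suc j)}"

lemma continuous_on_r: "continuous_on {0..1} r"
  using simple_path_imp_path[OF r(1)] by (simp add: path_def)

lemma piece_connected: "j < l \<Longrightarrow> connected (piece j)"
  unfolding piece_def using t_nonneg[of j] t_le_1[of "Suc j"]
  by (intro connected_continuous_image continuous_on_subset[OF continuous_on_r]) auto

lemma piece_nonempty: "j < l \<Longrightarrow> piece j \<noteq> {}"
  using t_less[of j "Suc j"] unfolding piece_def by auto

lemma piece_inside_or_outside: "j < l \<Longrightarrow> piece j \<subseteq> inside \<beta> \<or> piece j \<subseteq> outside \<beta>"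
proof -
  assume "j < l"
  note J = Jordan_inside_outside[OF b(1,2), unfolded b(3)]
  have "piece j \<subseteq> inside \<beta> \<union> outside \<beta>"
    using r_notin_\<beta>_between[OF \<open>j < l\<close>] J unfolding piece_def by blast
  then show ?thesis
    using connectedD[OF piece_connected[OF \<open>j < l\<close>], of "inside \<beta>" "outside \<beta>"] J by blast
qed

lemma closure_piece: "j < l \<Longrightarrow> r ` {t j..t (Suc j)} \<subseteq> closure (piece j)"
proof -
  assume "j < l"
  then have ivl: "closure {t j<..<t (Suc j)} = {t j..t (Suc j)}" using t_less[of j "Suc j"] by simp
  have "continuous_on {t j..t (Suc j)} r"
    using continuous_on_subset[OF continuous_on_r] \<open>j < l\<close> t_nonneg[of j] t_le_1[of "Suc j"] by simp
  then have "r ` closure {t j<..<t (Suc j)} \<subseteq> closure (piece j)"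
    unfolding piece_def ivl[symmetric] by (rule image_closure_subset) (simp_all add: closure_subset)
  then show ?thesis using ivl by simp
qed

lemma piece_inside_at_crossing:
  assumes "0 < k" "k < l"
  shows "piece (k - 1) \<subseteq> inside \<beta> \<or> piece k \<subseteq> inside \<beta>"
proof (rule ccontr)
  assume "\<not> ?thesis"
  then have out: "piece (k - 1) \<subseteq> outside \<beta>" "piece k \<subseteq> outside \<beta>"
    using piece_inside_or_outside[of "k - 1"] piece_inside_or_outside[of k] assms by auto
  note J = Jordan_inside_outside[OF b(1,2), unfolded b(3)]
  have "crossing_point \<beta> \<rho> (r (t k))" using crossings r_t_in[of k] r_t_neq_z assms by auto
  moreover have "r ` ({t (k - 1)<..<t k} \<union> {t k<..<t (Suc k)}) \<subseteq> outside \<beta>"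
    using out assms unfolding piece_def by (simp add: image_Un)
  moreover have "pathstart r \<in> \<beta>" using z_in r(4) by (simp add: pathstart_def)
  moreover have "connected (outside \<beta>)" using J by blast
  moreover have "outside \<beta> \<subseteq> - \<beta>" using outside_no_overlap by blast
  ultimately show False
    using crossing_point_not_one_sided[OF r(1,2,3), of \<beta> "t (k - 1)" "t k" "t (Suc k)" "outside \<beta>"]
      t_nonneg[of "k - 1"] t_less[of "k - 1" k] t_less[of k "Suc k"] t_le_1[of "Suc k"]
      r_t_in[of "k - 1"] r_t_in[of "Suc k"] assms
    by auto
qed

lemma piece_disjoint:
  assumes "m < l" "j < l" "m \<noteq> j"
  shows "piece m \<inter> r ` {t j..t (Suc j)} = {}"
proof (rule ccontr)
  assume "\<not> ?thesis"
  then obtain s s' where s: "s \<in> {t m<..<t (Suc m)}" "s' \<in> {t j..t (Suc j)}" "r s = r s'"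
    unfolding piece_def by blast
  have "s = s'"
    using r_inj[of s s'] s assms t_nonneg[of m] t_le_1[of "Suc m"] t_nonneg[of j] t_le_1[of "Suc j"]
    by auto
  then show False
    using s assms t_le[of "Suc m" j] t_le[of "Suc j" m] by (cases "m < j") auto
qed

lemma bij_b: "bij_betw b {0..<1} \<beta>"
  using simple_loop_bij_betw[OF b(1,2)] b(3) by simp

definition bparam :: "complex \<Rightarrow> real" where
  "bparam = inv_into {0..<1} b"

lemma bparam: "w \<in> \<beta> \<Longrightarrow> bparam w \<in> {0..<1} \<and> b (bparam w) = w"
  using bij_b unfolding bparam_def bij_betw_def by (metis inv_into_into f_inv_into_f)

lemma bparam_b: "s \<in> {0..<1} \<Longrightarrow> bparam (b s) = s"
  using bij_b unfolding bparam_def bij_betw_def by simp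

lemma bparam_pos: "w \<in> \<beta> \<Longrightarrow> w \<noteq> z \<Longrightarrow> 0 < bparam w"
  using bparam[of w] b(4) by (cases "bparam w = 0") auto

text \<open>Parametrising \<beta> by b on [0, 1) puts z at parameter 0, so the arc of \<beta> between the
  endpoints of piece j that avoids z is b ` {lo j..hi j}.\<close>

definition lo :: "nat \<Rightarrow> real" where
  "lo j = min (bparam (r (t j))) (bparam (r (t (Suc j))))"

definition hi :: "nat \<Rightarrow> real" where
  "hi j = max (bparam (r (t j))) (bparam (r (t (Suc j))))"

lemma r_t_distinct: "0 < j \<Longrightarrow> j < l \<Longrightarrow> r (t j) \<noteq> r (t (Suc j))"
  using r_inj[of "t j" "t (Suc j)"] t_pos[of j] t_less_1[of j] t_less[of j "Suc j"]
    t_le_1[of "Suc j"] by auto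

lemma lo_hi:
  assumes "0 < j" "Suc j < l"
  shows "0 < lo j" "lo j < hi j" "hi j < 1"
proof -
  have ends: "r (t j) \<in> \<beta>" "r (t (Suc j)) \<in> \<beta>" using r_t_in[of j] r_t_in[of "Suc j"] assms by auto
  then have "bparam (r (t j)) \<noteq> bparam (r (t (Suc j)))"
    using bparam r_t_distinct[of j] assms by (metis Suc_lessD)
  then show "0 < lo j" "lo j < hi j" "hi j < 1"
    unfolding lo_def hi_def using ends bparam_pos bparam r_t_neq_z[of j] r_t_neq_z[of "Suc j"] assms
    by auto
qed

lemma b_lo_hi: "0 < j \<Longrightarrow> Suc j < l \<Longrightarrow> {b (lo j), b (hi j)} = {r (t j), r (t (Suc j))}"
  unfolding lo_def hi_def using bparam r_t_in[of j] r_t_in[of "Suc j"] by (auto simp: min_def max_def)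

lemma z_notin_b_span:
  assumes "0 < j" "Suc j < l"
  shows "z \<notin> b ` {lo j..hi j}"
proof
  assume "z \<in> b ` {lo j..hi j}"
  then obtain s where "s \<in> {lo j..hi j}" "b s = b 0" using b(4) by auto
  then show False using simple_path_inj_interior[OF b(1), of s 0] lo_hi[OF assms] by auto
qed

lemma r_span_meets_\<beta>: "j < l \<Longrightarrow> r ` {t j..t (Suc j)} \<inter> \<beta> = {r (t j), r (t (Suc j))}"
  using r_notin_\<beta>_between[of j] r_t_in[of j] r_t_in[of "Suc j"] t_less[of j "Suc j"]
  by (fastforce simp: less_eq_real_def)

lemma arc_r_span: "0 < j \<Longrightarrow> Suc j < l \<Longrightarrow> arc (subpath (t j) (t (Suc j)) r)"
  using arc_simple_path_subpath[OF r(1)] r_t_distinct[of j] t_nonneg t_le_1 by simp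

lemma path_image_r_span: "j < l \<Longrightarrow> path_image (subpath (t j) (t (Suc j)) r) = r ` {t j..t (Suc j)}"
  using t_less[of j "Suc j"] by (simp add: path_image_subpath)

lemma digon_from_piece:
  assumes j: "0 < j" "Suc j < l" and no_crossing: "\<forall>s \<in> {lo j<..<hi j}. b s \<notin> \<rho>"
  shows "\<exists>\<alpha> \<gamma>. digon \<beta> \<rho> \<alpha> \<gamma> \<and> z \<notin> \<alpha> \<union> \<gamma>"
proof -
  let ?x = "r (t j)" and ?y = "r (t (Suc j))"
  let ?\<alpha> = "b ` {lo j..hi j}" and ?\<gamma> = "r ` {t j..t (Suc j)}"
  have lohi: "0 < lo j" "lo j < hi j" "hi j < 1" using lo_hi[OF j] .
  have ends: "{b (lo j), b (hi j)} = {?x, ?y}" using b_lo_hi[OF j] .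
  have "b (lo j) \<noteq> b (hi j)"
    using simple_path_inj_interior[OF b(1), of "lo j" "hi j"] lohi by auto
  then have "arc (subpath (lo j) (hi j) b)"
    by (intro arc_simple_path_subpath[OF b(1)]) (use lohi in auto)
  then have "segment_between ?\<alpha> (b (lo j)) (b (hi j))"
    unfolding segment_between_iff_arc using lohi by (intro exI[of _ "subpath (lo j) (hi j) b"])
      (simp add: path_image_subpath)
  then have seg_\<alpha>: "segment_between ?\<alpha> ?x ?y"
    using ends segment_between_commute by (metis doubleton_eq_iff)
  have seg_\<gamma>: "segment_between ?\<gamma> ?x ?y"
    unfolding segment_between_iff_arc using arc_r_span[OF j] path_image_r_span[of j] j
    by (intro exI[of _ "subpath (t j) (t (Suc j)) r"]) simp
  have "?\<alpha> \<subseteq> \<beta>" using b(3) lohi by (auto simp: path_image_def)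
  moreover have "?\<gamma> \<subseteq> \<rho>" using r_in_\<rho> t_nonneg[of j] t_le_1[of "Suc j"] j by auto
  moreover have "\<beta> \<inter> ?\<gamma> = {?x, ?y}" using r_span_meets_\<beta>[of j] j by auto
  moreover have "\<rho> \<inter> ?\<alpha> = {?x, ?y}"
  proof
    show "\<rho> \<inter> ?\<alpha> \<subseteq> {?x, ?y}"
    proof
      fix w assume w: "w \<in> \<rho> \<inter> ?\<alpha>"
      then obtain s where s: "s \<in> {lo j..hi j}" "w = b s" by auto
      then have "s = lo j \<or> s = hi j" using no_crossing w by fastforce
      then show "w \<in> {?x, ?y}" using s ends by auto
    qed
    have "{b (lo j), b (hi j)} \<subseteq> ?\<alpha>" using lohi by auto
    then show "{?x, ?y} \<subseteq> \<rho> \<inter> ?\<alpha>"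
      using ends r_t_in[of j] r_t_in[of "Suc j"] j by auto
  qed
  ultimately have "digon \<beta> \<rho> ?\<alpha> ?\<gamma>"
    unfolding digon_def using seg_\<alpha> seg_\<gamma> by blast
  moreover have "z \<notin> ?\<gamma>"
  proof
    assume "z \<in> ?\<gamma>"
    then obtain s where "s \<in> {t j..t (Suc j)}" "r s = r 0" using r(4) by auto
    then show False
      using r_inj[of s 0] t_pos[of j] t_less_1[of "Suc j"] j by auto
  qed
  ultimately show ?thesis using z_notin_b_span[OF j] by blast
qed

lemma inner_intersection_index:
  assumes j: "0 < j" "Suc j < l" and s: "s \<in> {lo j<..<hi j}" "b s \<in> \<rho>"
  obtains k where "0 < k" "k < l" "k \<noteq> j" "k \<noteq> Suc j" "b s = r (t k)"
proof -
  have lohi: "0 < lo j" "lo j < hi j" "hi j < 1" using lo_hi[OF j] .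
  have "b s \<in> \<beta>" using b(3) s(1) lohi by (auto simp: path_image_def)
  then obtain k where k: "k < l" "b s = r (t k)" using intersection_param s(2) by blast
  have "b s \<noteq> z" using z_notin_b_span[OF j] s(1) by auto
  then have "k \<noteq> 0" using k(2) t_0 r(4) by (metis)
  moreover have "bparam (b s) = s" using bparam_b s(1) lohi by auto
  then have "k \<noteq> j" "k \<noteq> Suc j" using k(2) s(1) unfolding lo_def hi_def by auto
  ultimately show thesis using that k by blast
qed

lemma piece_ends_in_span:
  assumes j: "0 < j" "Suc j < l" "piece j \<subseteq> inside \<beta>"
    and m: "m < l" "m \<noteq> j" "piece m \<subseteq> inside \<beta>"
    and s: "s \<in> {lo j<..<hi j}" "b s \<in> {r (t m), r (t (Suc m))}"
  shows "{r (t m), r (t (Suc m))} \<subseteq> b ` {lo j..hi j}"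
proof -
  have lohi: "0 < lo j" "lo j < hi j" "hi j < 1" using lo_hi[OF j(1,2)] .
  obtain c1 c2 where c: "arc c1" "arc c2" "pathstart c1 = b (lo j)" "pathfinish c1 = b (hi j)"
      "pathstart c2 = b (lo j)" "pathfinish c2 = b (hi j)" "path_image c1 = b ` {lo j..hi j}"
      "path_image c1 \<inter> path_image c2 = {b (lo j), b (hi j)}" "path_image c1 \<union> path_image c2 = \<beta>"
    using simple_loop_split_arcs[OF b(1,2) lohi] b(3) by metis
  define c where "c = subpath (t j) (t (Suc j)) r"
  have c_image: "path_image c = r ` {t j..t (Suc j)}" unfolding c_def using path_image_r_span j by simp
  have "{pathstart c, pathfinish c} = {b (lo j), b (hi j)}"
    unfolding c_def using b_lo_hi[OF j(1,2)] by simp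
  moreover have "path_image c \<inter> (path_image c1 \<union> path_image c2) = {b (lo j), b (hi j)}"
    using c_image c(9) r_span_meets_\<beta>[of j] b_lo_hi[OF j(1,2)] j by simp
  moreover have "piece j \<subseteq> path_image c \<inter> inside (path_image c1 \<union> path_image c2)"
    using c_image c(9) j(3) unfolding piece_def by auto
  then have "path_image c \<inter> inside (path_image c1 \<union> path_image c2) \<noteq> {}"
    using piece_nonempty[of j] j by auto
  moreover have "piece m \<inter> path_image c = {}" using piece_disjoint[OF m(1) _ m(2)] c_image j by simp
  ultimately have side:
      "closure (piece m) \<inter> \<beta> \<subseteq> path_image c1 \<or> closure (piece m) \<inter> \<beta> \<subseteq> path_image c2"
    using theta_curve_closure_side[OF c(1,2) arc_r_span[OF j(1,2), folded c_def] c(3-6) _ c(8)]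
      piece_connected[OF m(1)] m(3) c(9) by metis
  have ends: "{r (t m), r (t (Suc m))} \<subseteq> closure (piece m) \<inter> \<beta>"
    using closure_piece[OF m(1)] r_t_in[of m] r_t_in[of "Suc m"] t_le[of m "Suc m"] m(1) by auto
  have s01: "s \<in> {0<..<1}" using s(1) lohi by auto
  have "b s \<in> path_image c1" using c(7) s(1) by auto
  moreover have "b s \<noteq> b (lo j)" "b s \<noteq> b (hi j)"
    using simple_path_inj_interior[OF b(1) s01, of "lo j"] simple_path_inj_interior[OF b(1) s01, of "hi j"]
      s(1) lohi by auto
  ultimately have "b s \<notin> path_image c2" using c(8) by blast
  then show ?thesis using side ends s(2) c(7) by blast
qed

lemma shorter_inside_piece:
  assumes j: "0 < j" "Suc j < l" "piece j \<subseteq> inside \<beta>"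
    and s: "s \<in> {lo j<..<hi j}" "b s \<in> \<rho>"
  obtains m where "0 < m" "Suc m < l" "piece m \<subseteq> inside \<beta>" "hi m - lo m < hi j - lo j"
proof -
  have lohi: "0 < lo j" "lo j < hi j" "hi j < 1" using lo_hi[OF j(1,2)] .
  obtain k where k: "0 < k" "k < l" "k \<noteq> j" "k \<noteq> Suc j" "b s = r (t k)"
    using inner_intersection_index[OF j(1,2) s] .
  obtain m where m: "m = k - 1 \<or> m = k" "piece m \<subseteq> inside \<beta>"
    using piece_inside_at_crossing[OF k(1,2)] by blast
  have "m < l" "m \<noteq> j" using m(1) k by auto
  moreover have bs: "b s \<in> {r (t m), r (t (Suc m))}" using m(1) k(1,5) by auto
  ultimately have span: "{r (t m), r (t (Suc m))} \<subseteq> b ` {lo j..hi j}"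
    using piece_ends_in_span[OF j _ _ m(2) s(1)] by blast
  have "0 < m" using span z_notin_b_span[OF j(1,2)] r(4) t_0 by (cases "m = 0") auto
  moreover have "Suc m < l"
    using span z_notin_b_span[OF j(1,2)] r_1 t_l \<open>m < l\<close> by (cases "Suc m = l") auto
  moreover have "hi m - lo m < hi j - lo j"
  proof -
    have "bparam (r (t m)) \<in> {lo j..hi j}" "bparam (r (t (Suc m))) \<in> {lo j..hi j}"
      using span bparam_b lohi by auto
    moreover have "bparam (b s) = s" using bparam_b s(1) lohi by simp
    ultimately show ?thesis using bs s(1) unfolding lo_def hi_def by auto
  qed
  ultimately show thesis using that m(2) by blast
qed

lemma digon_avoiding_base: "\<exists>\<alpha> \<gamma>. digon \<beta> \<rho> \<alpha> \<gamma> \<and> z \<notin> \<alpha> \<union> \<gamma>"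
proof (cases "l = 3")
  case True
  have "b s \<notin> \<rho>" if s: "s \<in> {lo 1<..<hi 1}" for s
  proof
    assume "b s \<in> \<rho>"
    moreover have "Suc 1 < l" using True by simp
    ultimately obtain k where "0 < k" "k < l" "k \<noteq> 1" "k \<noteq> Suc 1"
      using inner_intersection_index[OF zero_less_one _ s] by blast
    then show False using True by simp
  qed
  then show ?thesis using digon_from_piece[of 1] True by simp
next
  case False
  define C where "C = {j. 0 < j \<and> Suc j < l \<and> piece j \<subseteq> inside \<beta>}"
  have "C \<noteq> {}"
  proof (cases "piece 1 \<subseteq> inside \<beta>")
    case True then have "1 \<in> C" unfolding C_def using three_le_l by simp
    then show ?thesis by blast
  next
    case False
    then have "piece 2 \<subseteq> inside \<beta>" using piece_inside_at_crossing[of 2] three_le_l by simp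
    then have "2 \<in> C" unfolding C_def using three_le_l \<open>l \<noteq> 3\<close> by simp
    then show ?thesis by blast
  qed
  moreover have "finite C" unfolding C_def by (rule finite_subset[of _ "{..<l}"]) auto
  ultimately obtain j where "is_arg_min (\<lambda>j. hi j - lo j) (\<lambda>j. j \<in> C) j"
    using ex_is_arg_min_if_finite by blast
  then have j: "0 < j" "Suc j < l" "piece j \<subseteq> inside \<beta>"
    and minimal: "\<And>m. m \<in> C \<Longrightarrow> \<not> hi m - lo m < hi j - lo j"
    unfolding is_arg_min_def C_def by auto
  have "\<forall>s \<in> {lo j<..<hi j}. b s \<notin> \<rho>"
  proof (intro ballI notI)
    fix s assume "s \<in> {lo j<..<hi j}" "b s \<in> \<rho>"
    then obtain m where "0 < m" "Suc m < l" "piece m \<subseteq> inside \<beta>" "hi m - lo m < hi j - lo j"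
      using shorter_inside_piece[OF j] by blast
    then show False using minimal[of m] unfolding C_def by simp
  qed
  then show ?thesis using digon_from_piece[OF j(1,2)] by blast
qed

end

theorem proposition6p2:
  fixes \<beta> \<rho> :: "complex set" and l :: nat and z :: complex
  assumes "simple_closed_curve \<beta>" and "simple_closed_curve \<rho>"
    and "finite (\<beta> \<inter> \<rho>)" and "card (\<beta> \<inter> \<rho>) = l" and "l \<ge> 3"
    and "tangential_point \<beta> \<rho> z"
    and "\<forall>w \<in> \<beta> \<inter> \<rho> - {z}. crossing_point \<beta> \<rho> w"
  shows "\<exists>\<alpha> \<gamma>. digon \<beta> \<rho> \<alpha> \<gamma> \<and> z \<notin> \<alpha> \<union> \<gamma>"
proof -
  have z: "z \<in> \<beta>" "z \<in> \<rho>" using assms(6) unfolding tangential_point_def by auto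
  obtain b where b: "simple_path b" "pathfinish b = pathstart b" "path_image b = \<beta>" "b 0 = z"
    using simple_closed_curve_loop_at[OF assms(1) z(1)] by blast
  obtain r where r: "simple_path r" "pathfinish r = pathstart r" "path_image r = \<rho>" "r 0 = z"
    using simple_closed_curve_loop_at[OF assms(2) z(2)] by blast
  define T where "T = {s \<in> {0..<1}. r s \<in> \<beta>}"
  have "bij_betw r T (\<beta> \<inter> \<rho>)"
  proof (rule bij_betw_subset[OF simple_loop_bij_betw[OF r(1,2)]])
    show "T \<subseteq> {0..<1}" unfolding T_def by auto
    show "r ` T = \<beta> \<inter> \<rho>"
      using bij_betw_imp_surj_on[OF simple_loop_bij_betw[OF r(1,2)]] r(3) unfolding T_def by auto
  qed
  then have "finite T" "card T = l" using assms(3,4) bij_betw_finite bij_betw_same_card by auto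
  moreover have "T \<subseteq> {0..<1}" "0 \<in> T" unfolding T_def using z r(4) by auto
  ultimately obtain t where "strict_mono_on {..l} t" "t 0 = 0" "t l = 1" "t ` {..<l} = T"
    using finite_set_increasing_enumeration by metis
  then interpret crossing_loops \<beta> \<rho> z b r l t
    using b r assms(5,7) unfolding T_def by unfold_locales auto
  show ?thesis by (rule digon_avoiding_base)
qed

end
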